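(* Let $\mu,\nu>0$; for integers $N>\max(\mu,\nu)$ let $v=\mu/N$, $w=\nu/N$, $S=\{0,\dots,N\}$ and \[ P_{ij}=(1-v)^{N-i}(1-w)^i\sum_{\substack{\ell,m\ge0:\ \ell-m=j-i}}\binom{N-i}{\ell}\binom{i}{m}\Big(\frac v{1-v}\Big)^\ell\Big(\frac w{1-w}\Big)^m. \] For $z\in[0,1]$ and $k\in\mathbb{Z}$ let $p_k(z)=\mathbb{P}(X-Y=k)$ with independent $X\sim\mathrm{Poi}_{\mu(1-z)}$, $Y\sim\mathrm{Poi}_{\nu z}$. Then \[ \sum_{j\in S}\Big|\sqrt{P_{ij}P_{ji}}-\sqrt{p_{j-i}(i/N)\,p_{i-j}(i/N)}\Big|=\mathcal{O}(1/N) \] uniformly in $i$ as long as $i/N$ is bounded away from $0$ and $1$; that is, for every $\delta\in(0,1/2)$ there is $C_\delta<\infty$ such that the left side is at most $C_\delta/N$ for all such $N$ and all $i\in S$ with $\delta\le i/N\le1-\delta$.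
   Context: $\mathrm{Poi}_\lambda$ is the Poisson distribution with parameter $\lambda$ ($\mathrm{Poi}_0$ the point mass at $0$). *)

theory Defs
  imports "HOL-Analysis.Analysis"
begin

text \<open>Poisson probability mass function with parameter a \<ge> 0 (a = 0 gives the point mass at 0,
  since 0^0 = 1).\<close>
definition poi :: "real \<Rightarrow> nat \<Rightarrow> real" where
  "poi a n = a ^ n / fact n * exp (- a)"

text \<open>p_k(z) = P(X - Y = k), X ~ Poi(mu(1-z)), Y ~ Poi(nu z) independent:
  sum over the value m of Y.\<close>
definition pdiff :: "real \<Rightarrow> real \<Rightarrow> real \<Rightarrow> int \<Rightarrow> real" where
  "pdiff \<mu> \<nu> z k =
     (\<Sum>m::nat. if k + int m \<ge> 0
                then poi (\<mu> * (1 - z)) (nat (k + int m)) * poi (\<nu> * z) m else 0)"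

text \<open>Transition matrix P_ij with v = mu/N, w = nu/N. Binomial coefficients vanish outside
  0 \<le> l \<le> N-i, 0 \<le> m \<le> i, so the sum over l,m \<ge> 0 is the finite sum below.\<close>
definition Pmat :: "real \<Rightarrow> real \<Rightarrow> nat \<Rightarrow> nat \<Rightarrow> nat \<Rightarrow> real" where
  "Pmat \<mu> \<nu> N i j =
     (let v = \<mu> / real N; w = \<nu> / real N in
       (1 - v) ^ (N - i) * (1 - w) ^ i *
       (\<Sum>(l, m) \<in> {(l, m). l \<le> N - i \<and> m \<le> i \<and> int l - int m = int j - int i}.
          real ((N - i) choose l) * real (i choose m) * (v / (1 - v)) ^ l * (w / (1 - w)) ^ m))"

end

theory Submission
  imports Defs
begin

text \<open>P_ij and p_(j-i)(i/N) are both laws of a difference X - Y of independent variables: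
  X ~ Bin(N - i, \<mu>/N), Y ~ Bin(i, \<nu>/N) for the chain, X ~ Poi(\<mu>(1 - z)), Y ~ Poi(\<nu> z) with
  z = i/N in the limit. Pointwise, Bin(n, p)(l) differs from Poi(a)(l) by at most
  (p (M + 1) + |n p - a|) (4M)^l/l! when n p and a are at most M; the means agree for P_ij and are
  off by at most |j - i| M/N for P_ji. Hence both entries are within O((1 + |k|)/N) S(k) of their
  limits, k = j - i, where S(k) is the sum over m of the weights (4M)^(k+m)/(k+m)! (4M)^m/m!.
  For z bounded away from 0 and 1 the Poisson means have a bounded ratio T, so p_k \<le> T^|k| p_(-k);
  this turns the entrywise bounds into a bound on the square roots of the products at the cost
  of a factor T^|k|. Finally the weights (2T)^|k| are absorbed by the exponential series:
  \<Sum>_k W^|k| S(k) \<le> exp(4 M W)^2.\<close>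

lemma real_Suc_le_two_power: "real (Suc n) \<le> 2 ^ n"
  by (metis Suc_leI less_exp of_nat_le_iff of_nat_numeral of_nat_power)

lemma power_mult_add_le_power:
  fixes T M :: real
  assumes "1 \<le> T" "0 \<le> M"
  shows "T ^ K * (M + 1 + real K) \<le> (M + 1) * (2 * T) ^ K"
proof -
  have "M + 1 + real K \<le> (M + 1) * real (Suc K)"
    using assms by (simp add: algebra_simps)
  also have "\<dots> \<le> (M + 1) * 2 ^ K"
    using assms real_Suc_le_two_power[of K] by (intro mult_left_mono) auto
  finally have "T ^ K * (M + 1 + real K) \<le> T ^ K * ((M + 1) * 2 ^ K)"
    using assms by (intro mult_left_mono) auto
  then show ?thesis
    by (simp add: power_mult_distrib ac_simps)
qed

lemma add_mult_abs_mult_sub_mult_le: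
  fixes p e x y D c :: real
  assumes "0 \<le> p" "p \<le> e" "\<bar>x - y\<bar> \<le> D" "0 \<le> c"
  shows "p * c + \<bar>x * p - y * p\<bar> \<le> e * (c + D)"
proof -
  have "\<bar>x * p - y * p\<bar> \<le> D * p"
    using assms by (simp add: abs_mult mult_right_mono flip: left_diff_distrib)
  then have "p * c + \<bar>x * p - y * p\<bar> \<le> p * (c + D)"
    by (simp add: algebra_simps)
  also have "\<dots> \<le> e * (c + D)"
    using assms by (intro mult_right_mono) auto
  finally show ?thesis .
qed

lemma abs_power_diff_le:
  fixes x y :: "'a::linordered_idom"
  assumes "0 \<le> x" "0 \<le> y" "x \<le> M" "y \<le> M"
  shows "\<bar>x ^ n - y ^ n\<bar> \<le> of_nat n * M ^ (n - 1) * \<bar>x - y\<bar>"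
proof (induction n)
  case (Suc n)
  have "\<bar>x ^ Suc n - y ^ Suc n\<bar> = \<bar>x * (x ^ n - y ^ n) + y ^ n * (x - y)\<bar>"
    by (simp add: algebra_simps)
  also have "\<dots> \<le> x * \<bar>x ^ n - y ^ n\<bar> + y ^ n * \<bar>x - y\<bar>"
    using assms by (simp add: abs_mult abs_triangle_ineq[THEN order_trans])
  also have "\<dots> \<le> M * (of_nat n * M ^ (n - 1) * \<bar>x - y\<bar>) + M ^ n * \<bar>x - y\<bar>"
    using Suc.IH assms by (intro add_mono mult_mono power_mono) auto
  also have "\<dots> = of_nat (Suc n) * M ^ (Suc n - 1) * \<bar>x - y\<bar>"
    by (cases n) (simp_all add: algebra_simps)
  finally show ?case .
qed simp

lemma abs_exp_minus_diff_le:
  fixes a b :: real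
  assumes "0 \<le> a" "0 \<le> b"
  shows "\<bar>exp (- a) - exp (- b)\<bar> \<le> \<bar>a - b\<bar>"
proof -
  have *: "exp (- a) - exp (- b) \<le> b - a" if "0 \<le> a" "a \<le> b" for a b :: real
  proof -
    have "exp (- a) - exp (- b) = exp (- a) * (1 - exp (a - b))"
      by (simp add: algebra_simps flip: exp_add)
    also have "\<dots> \<le> 1 - exp (a - b)"
      using that by (intro mult_left_le_one_le) auto
    also have "\<dots> \<le> b - a"
      using exp_ge_add_one_self[of "a - b"] by linarith
    finally show ?thesis .
  qed
  show ?thesis
    using assms *[of a b] *[of b a] by (cases "a \<le> b") auto
qed

lemma abs_one_minus_exp_minus_le:
  fixes p :: real
  assumes "0 \<le> p"
  shows "\<bar>(1 - p) - exp (- p)\<bar> \<le> p ^ 2"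
proof -
  have "1 \<le> (1 + p) * (1 - p + p ^ 2)"
    using assms by (simp add: algebra_simps power2_eq_square power3_eq_cube)
  also have "\<dots> \<le> exp p * (1 - p + p ^ 2)"
  proof (rule mult_right_mono)
    show "0 \<le> 1 - p + p ^ 2"
      using zero_le_power2[of "p - 1/2"] by (simp add: power2_eq_square algebra_simps)
  qed simp
  finally have "exp (- p) \<le> 1 - p + p ^ 2"
    by (simp add: exp_minus field_simps)
  then show ?thesis
    using exp_ge_add_one_self[of "- p"] by simp
qed

lemma abs_sqrt_sub_le: "0 \<le> b \<Longrightarrow> 0 \<le> d \<Longrightarrow> \<bar>sqrt b - sqrt d\<bar> * sqrt d \<le> \<bar>b - d\<bar>"
proof -
  assume "0 \<le> b" "0 \<le> d"
  then have "b - d = (sqrt b - sqrt d) * (sqrt b + sqrt d)"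
    by (simp add: algebra_simps)
  then have "\<bar>b - d\<bar> = \<bar>sqrt b - sqrt d\<bar> * (sqrt b + sqrt d)"
    using \<open>0 \<le> b\<close> \<open>0 \<le> d\<close> by (simp add: abs_mult)
  then show ?thesis
    using \<open>0 \<le> b\<close> by (simp add: mult_left_mono)
qed

lemma abs_sqrt_mult_sub_sqrt_mult_le:
  fixes a b c d E T :: real
  assumes "0 \<le> a" "0 \<le> b" "0 < c" "0 < d" "a \<le> E * c" "c \<le> T * d" "d \<le> T * c" "1 \<le> E" "1 \<le> T"
  shows "\<bar>sqrt (a * b) - sqrt (c * d)\<bar> \<le> sqrt E * T * (\<bar>a - c\<bar> + \<bar>b - d\<bar>)"
proof -
  have "sqrt T \<le> T"
    using assms(9) real_sqrt_le_mono[of T "T * T"] by (simp add: mult_le_cancel_left1)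
  have "E * c \<le> E * (T * d)"
    using assms by (intro mult_left_mono) auto
  then have "sqrt a \<le> sqrt E * sqrt T * sqrt d"
    using assms(5) by (simp flip: real_sqrt_mult)
  then have "sqrt a * \<bar>sqrt b - sqrt d\<bar> \<le> (sqrt E * sqrt T * sqrt d) * \<bar>sqrt b - sqrt d\<bar>"
    by (rule mult_right_mono) simp
  also have "\<dots> = sqrt E * sqrt T * (\<bar>sqrt b - sqrt d\<bar> * sqrt d)"
    by (simp add: ac_simps)
  also have "\<dots> \<le> sqrt E * T * \<bar>b - d\<bar>"
    using assms \<open>sqrt T \<le> T\<close> abs_sqrt_sub_le[of b d] by (intro mult_mono) auto
  finally have ab: "sqrt a * \<bar>sqrt b - sqrt d\<bar> \<le> sqrt E * T * \<bar>b - d\<bar>" .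
  have "sqrt d \<le> sqrt T * sqrt c"
    using assms(7) by (simp flip: real_sqrt_mult)
  then have "sqrt d * \<bar>sqrt a - sqrt c\<bar> \<le> (sqrt T * sqrt c) * \<bar>sqrt a - sqrt c\<bar>"
    by (rule mult_right_mono) simp
  also have "\<dots> = sqrt T * (\<bar>sqrt a - sqrt c\<bar> * sqrt c)"
    by (simp add: ac_simps)
  also have "\<dots> \<le> sqrt E * T * \<bar>a - c\<bar>"
    using assms \<open>sqrt T \<le> T\<close> abs_sqrt_sub_le[of a c]
    by (intro mult_mono) (auto intro: order_trans[OF _ mult_right_mono[of 1 "sqrt E"]])
  finally have cd: "sqrt d * \<bar>sqrt a - sqrt c\<bar> \<le> sqrt E * T * \<bar>a - c\<bar>" .
  have "\<bar>sqrt (a * b) - sqrt (c * d)\<bar> = \<bar>sqrt a * (sqrt b - sqrt d) + sqrt d * (sqrt a - sqrt c)\<bar>"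
    by (simp add: real_sqrt_mult algebra_simps)
  also have "\<dots> \<le> sqrt a * \<bar>sqrt b - sqrt d\<bar> + sqrt d * \<bar>sqrt a - sqrt c\<bar>"
    using assms by (simp add: abs_mult abs_triangle_ineq[THEN order_trans])
  finally show ?thesis
    using ab cd by (simp add: algebra_simps)
qed

lemma binomial_fact_ge_power_diff: "(n - l) ^ l \<le> (n choose l) * fact l"
proof (cases "l \<le> n")
  case True
  have "(n - l) ^ l = (\<Prod>x\<in>{n - l + 1..n}. n - l)"
    using True by simp
  also have "\<dots> \<le> \<Prod>{n - l + 1..n}"
    by (rule prod_mono) auto
  also have "\<dots> = fact n div fact (n - l)"
    by (simp add: fact_div_fact)
  also have "\<dots> = (n choose l) * fact l"
    using binomial_fact_lemma[OF True] by (metis fact_nonzero mult.commute nonzero_mult_div_cancel_right mult.assoc)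
  finally show ?thesis .
qed (simp add: binomial_eq_0)

lemma power_le_binomial_fact:
  assumes "l \<le> n"
  shows "real n ^ l \<le> real (n choose l) * fact l + real l ^ 2 * real n ^ (l - 1)"
proof -
  have "real n ^ l - real (n - l) ^ l \<le> real l * real n ^ (l - 1) * \<bar>real n - real (n - l)\<bar>"
    using abs_power_diff_le[of "real n" "real (n - l)" "real n" l] by simp
  also have "\<dots> = real l ^ 2 * real n ^ (l - 1)"
    using assms by (simp add: of_nat_diff power2_eq_square)
  moreover have "real (n - l) ^ l \<le> real (n choose l) * fact l"
    using binomial_fact_ge_power_diff[of n l] by (metis of_nat_fact of_nat_le_iff of_nat_mult of_nat_power)
  ultimately show ?thesis by linarith
qed

section \<open>Exponential series terms and Poisson probabilities\<close>

definition exp_term :: "real \<Rightarrow> nat \<Rightarrow> real" where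
  "exp_term x n = x ^ n / fact n"

lemma exp_term_sums: "exp_term x sums exp x"
proof -
  have "exp_term x = (\<lambda>n. inverse (fact n) * x ^ n)"
    by (simp add: exp_term_def fun_eq_iff field_simps)
  then show ?thesis
    using exp_converges[of x] by (simp add: divide_inverse mult.commute)
qed

lemma summable_exp_term: "summable (exp_term x)"
  using exp_term_sums by (rule sums_summable)

lemma suminf_exp_term: "suminf (exp_term x) = exp x"
  using exp_term_sums by (rule sums_unique[symmetric])

lemma exp_term_nonneg: "0 \<le> x \<Longrightarrow> 0 \<le> exp_term x n"
  by (simp add: exp_term_def)

lemma exp_term_mono: "0 \<le> x \<Longrightarrow> x \<le> y \<Longrightarrow> exp_term x n \<le> exp_term y n"
  by (simp add: exp_term_def divide_right_mono power_mono)

lemma exp_term_mult_power: "exp_term x n * y ^ n = exp_term (x * y) n"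
  by (simp add: exp_term_def power_mult_distrib)

lemma poi_eq_exp_term: "poi a n = exp_term a n * exp (- a)"
  by (simp add: poi_def exp_term_def)

lemma poi_nonneg: "0 \<le> a \<Longrightarrow> 0 \<le> poi a n"
  by (simp add: poi_def)

lemma abs_poi_le_exp_term: "0 \<le> a \<Longrightarrow> a \<le> x \<Longrightarrow> \<bar>poi a n\<bar> \<le> exp_term x n"
  unfolding poi_eq_exp_term
  by (auto simp: exp_term_nonneg abs_mult intro: order_trans[OF mult_right_le_one_le exp_term_mono])

lemma abs_poi_diff_le:
  assumes "0 \<le> a" "a \<le> M" "0 \<le> b" "b \<le> M" "1 \<le> M"
  shows "\<bar>poi a n - poi b n\<bar> \<le> \<bar>a - b\<bar> * exp_term (2 * M) n"
proof -
  have "\<bar>a ^ n * exp (- a) - b ^ n * exp (- b)\<bar>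
      = \<bar>(a ^ n - b ^ n) * exp (- a) + b ^ n * (exp (- a) - exp (- b))\<bar>"
    by (simp add: algebra_simps)
  also have "\<dots> \<le> \<bar>a ^ n - b ^ n\<bar> * exp (- a) + b ^ n * \<bar>exp (- a) - exp (- b)\<bar>"
    using assms by (simp add: abs_mult abs_triangle_ineq[THEN order_trans])
  also have "\<dots> \<le> real n * M ^ (n - 1) * \<bar>a - b\<bar> * 1 + M ^ n * \<bar>a - b\<bar>"
    using assms abs_power_diff_le[of a b M n] abs_exp_minus_diff_le[of a b]
    by (intro add_mono mult_mono power_mono) auto
  also have "\<dots> \<le> real n * M ^ n * \<bar>a - b\<bar> + M ^ n * \<bar>a - b\<bar>"
    using assms power_increasing[of "n - 1" n M] by (auto intro!: mult_right_mono mult_left_mono)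
  also have "\<dots> = real (Suc n) * M ^ n * \<bar>a - b\<bar>"
    by (simp add: algebra_simps)
  also have "\<dots> \<le> 2 ^ n * M ^ n * \<bar>a - b\<bar>"
    using assms real_Suc_le_two_power[of n] by (intro mult_right_mono) auto
  finally have "\<bar>a ^ n * exp (- a) - b ^ n * exp (- b)\<bar> / fact n \<le> 2 ^ n * M ^ n * \<bar>a - b\<bar> / fact n"
    by (rule divide_right_mono) simp
  then show ?thesis
    by (simp add: poi_def exp_term_def power_mult_distrib algebra_simps flip: diff_divide_distrib)
qed

section \<open>Binomial versus Poisson probabilities\<close>

definition binom_prob :: "nat \<Rightarrow> real \<Rightarrow> nat \<Rightarrow> real" where
  "binom_prob n p l = real (n choose l) * p ^ l * (1 - p) ^ (n - l)"

lemma binom_prob_nonneg: "0 \<le> p \<Longrightarrow> p \<le> 1 \<Longrightarrow> 0 \<le> binom_prob n p l"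
  by (simp add: binom_prob_def)

lemma binom_prob_eq_0: "n < l \<Longrightarrow> binom_prob n p l = 0"
  by (simp add: binom_prob_def)

lemma binom_prob_eq_power_mult:
  assumes "l \<le> n" "p \<noteq> 1"
  shows "binom_prob n p l = (1 - p) ^ n * (real (n choose l) * (p / (1 - p)) ^ l)"
proof -
  have "(1 - p) ^ n = (1 - p) ^ l * (1 - p) ^ (n - l)"
    using assms(1) by (simp flip: power_add)
  moreover have "(1 - p) ^ l * (p / (1 - p)) ^ l = p ^ l"
    using assms(2) by (simp flip: power_mult_distrib)
  ultimately show ?thesis
    by (simp add: binom_prob_def algebra_simps)
qed

lemma binom_prob_le_exp_term:
  assumes "0 \<le> p" "p \<le> 1"
  shows "binom_prob n p l \<le> exp_term (real n * p) l"
proof -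
  have "real (n choose l) * fact l \<le> real n ^ l"
    using binomial_fact_pow[of n l] by (metis of_nat_fact of_nat_le_iff of_nat_mult of_nat_power)
  then have "real (n choose l) * fact l * (1 - p) ^ (n - l) \<le> real n ^ l * 1"
    using assms by (intro mult_mono power_le_one) auto
  then have "p ^ l / fact l * (real (n choose l) * fact l * (1 - p) ^ (n - l)) \<le> p ^ l / fact l * real n ^ l"
    using assms by (intro mult_left_mono) auto
  then show ?thesis
    by (simp add: binom_prob_def exp_term_def power_mult_distrib ac_simps)
qed

lemma abs_binom_prob_le_exp_term:
  assumes "0 \<le> p" "p \<le> 1" "real n * p \<le> x"
  shows "\<bar>binom_prob n p l\<bar> \<le> exp_term x l"
  using assms order_trans[OF binom_prob_le_exp_term[OF assms(1,2)] exp_term_mono[of "real n * p" x l]]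
  by (simp add: abs_of_nonneg binom_prob_nonneg)

lemma abs_power_one_minus_sub_exp_le:
  fixes p :: real
  assumes "0 \<le> p" "p \<le> 1" "l \<le> n"
  shows "\<bar>(1 - p) ^ (n - l) - exp (- (real n * p))\<bar> \<le> p * (real n * p + real l)"
proof -
  have "\<bar>(1 - p) ^ (n - l) - exp (- p) ^ (n - l)\<bar> \<le> real (n - l) * 1 ^ (n - l - 1) * \<bar>(1 - p) - exp (- p)\<bar>"
    using assms by (intro abs_power_diff_le) auto
  also have "\<dots> \<le> real n * p ^ 2"
    using abs_one_minus_exp_minus_le[OF assms(1)] assms by (intro mult_mono) auto
  finally have "\<bar>(1 - p) ^ (n - l) - exp (- (real (n - l) * p))\<bar> \<le> real n * p ^ 2"
    by (simp add: mult.commute flip: exp_of_nat_mult)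
  moreover have "\<bar>exp (- (real (n - l) * p)) - exp (- (real n * p))\<bar> \<le> \<bar>real (n - l) * p - real n * p\<bar>"
    using assms by (intro abs_exp_minus_diff_le) auto
  moreover have "\<bar>real (n - l) * p - real n * p\<bar> = p * real l"
    using assms by (simp add: of_nat_diff algebra_simps)
  ultimately have "\<bar>(1 - p) ^ (n - l) - exp (- (real n * p))\<bar> \<le> real n * p ^ 2 + p * real l"
    by linarith
  then show ?thesis
    by (simp add: power2_eq_square algebra_simps)
qed

lemma power_mult_poly_le_exp_term:
  assumes "1 \<le> M"
  shows "M ^ l * (real l ^ 2 + real l + M) / fact l \<le> (M + 1) * exp_term (4 * M) l"
proof -
  have "real (Suc l) ^ 2 \<le> 2 ^ l * 2 ^ l"
    using real_Suc_le_two_power[of l] by (simp add: power2_eq_square mult_mono)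
  also have "\<dots> = 4 ^ l"
    by (simp flip: power_mult_distrib)
  finally have "real (Suc l) ^ 2 \<le> 4 ^ l" .
  have "real l ^ 2 + real l + M \<le> (M + 1) * real (Suc l) ^ 2"
    using assms by (simp add: power2_eq_square algebra_simps)
  also have "\<dots> \<le> (M + 1) * 4 ^ l"
    using assms \<open>real (Suc l) ^ 2 \<le> 4 ^ l\<close> by (intro mult_left_mono) auto
  finally have "M ^ l * (real l ^ 2 + real l + M) / fact l \<le> M ^ l * ((M + 1) * 4 ^ l) / fact l"
    using assms by (intro divide_right_mono mult_left_mono) auto
  then show ?thesis
    by (simp add: exp_term_def power_mult_distrib algebra_simps)
qed

lemma abs_binomial_fact_mult_sub_le:
  fixes p :: real
  assumes "0 \<le> p" "p \<le> 1" "l \<le> n"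
  shows "\<bar>real (n choose l) * fact l * (1 - p) ^ (n - l) - real n ^ l * exp (- (real n * p))\<bar>
           \<le> real l ^ 2 * real n ^ (l - 1) + real n ^ l * (p * (real n * p + real l))"
proof -
  define P where "P = real (n choose l) * fact l"
  define q where "q = (1 - p) ^ (n - l)"
  have P: "P \<le> real n ^ l" "real n ^ l \<le> P + real l ^ 2 * real n ^ (l - 1)"
    using binomial_fact_pow[of n l] power_le_binomial_fact[OF assms(3)]
    by (simp_all add: P_def) (metis of_nat_fact of_nat_le_iff of_nat_mult of_nat_power)
  have q: "0 \<le> q" "q \<le> 1"
    using assms by (simp_all add: q_def power_le_one)
  have "\<bar>P * q - real n ^ l * exp (- (real n * p))\<bar>
      = \<bar>(P - real n ^ l) * q + real n ^ l * (q - exp (- (real n * p)))\<bar>"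
    by (simp add: algebra_simps)
  also have "\<dots> \<le> \<bar>P - real n ^ l\<bar> * q + real n ^ l * \<bar>q - exp (- (real n * p))\<bar>"
    using q by (simp add: abs_mult abs_triangle_ineq[THEN order_trans])
  also have "\<dots> \<le> real l ^ 2 * real n ^ (l - 1) * 1 + real n ^ l * (p * (real n * p + real l))"
  proof (rule add_mono)
    show "\<bar>P - real n ^ l\<bar> * q \<le> real l ^ 2 * real n ^ (l - 1) * 1"
      using P q by (intro mult_mono) auto
    show "real n ^ l * \<bar>q - exp (- (real n * p))\<bar> \<le> real n ^ l * (p * (real n * p + real l))"
      unfolding q_def using abs_power_one_minus_sub_exp_le[OF assms] by (rule mult_left_mono) simp
  qed
  finally show ?thesis
    by (simp add: P_def q_def)
qed

lemma abs_binom_prob_sub_poi_le_power: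
  assumes "0 \<le> p" "p \<le> 1"
  shows "\<bar>binom_prob n p l - poi (real n * p) l\<bar>
           \<le> p ^ l / fact l * (real l ^ 2 * real n ^ (l - 1) + real n ^ l * (p * (real n * p + real l)))"
proof (cases "l \<le> n")
  case True
  have "binom_prob n p l - poi (real n * p) l
      = p ^ l / fact l * (real (n choose l) * fact l * (1 - p) ^ (n - l) - real n ^ l * exp (- (real n * p)))"
    by (simp add: binom_prob_def poi_def power_mult_distrib field_simps)
  then have "\<bar>binom_prob n p l - poi (real n * p) l\<bar>
      = p ^ l / fact l * \<bar>real (n choose l) * fact l * (1 - p) ^ (n - l) - real n ^ l * exp (- (real n * p))\<bar>"
    using assms by (simp add: abs_mult)
  also have "\<dots> \<le> p ^ l / fact l * (real l ^ 2 * real n ^ (l - 1) + real n ^ l * (p * (real n * p + real l)))"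
    using abs_binomial_fact_mult_sub_le[OF assms True] assms by (intro mult_left_mono) auto
  finally show ?thesis .
next
  case False
  have "n \<le> l * l"
    using False le_square[of l] by linarith
  then have "real n \<le> real l ^ 2"
    by (metis of_nat_le_iff of_nat_mult power2_eq_square)
  moreover have "real n ^ l = real n * real n ^ (l - 1)"
    using False by (simp flip: power_Suc)
  ultimately have "real n ^ l \<le> real l ^ 2 * real n ^ (l - 1)"
    by (simp add: mult_right_mono)
  moreover have "poi (real n * p) l \<le> exp_term (real n * p) l"
    unfolding poi_eq_exp_term using assms by (intro mult_right_le_one_le exp_term_nonneg) auto
  moreover have "exp_term (real n * p) l = p ^ l / fact l * real n ^ l"
    by (simp add: exp_term_def power_mult_distrib)
  ultimately have "poi (real n * p) l \<le> p ^ l / fact l * (real l ^ 2 * real n ^ (l - 1))"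
    using assms by (smt (verit) divide_nonneg_nonneg fact_ge_zero mult_left_mono zero_le_power)
  also have "\<dots> \<le> p ^ l / fact l * (real l ^ 2 * real n ^ (l - 1) + real n ^ l * (p * (real n * p + real l)))"
    using assms by (intro mult_left_mono) auto
  finally show ?thesis
    using False assms by (simp add: binom_prob_eq_0 poi_nonneg)
qed

lemma binom_poi_error_le_exp_term:
  assumes "0 \<le> p" "real n * p \<le> M" "1 \<le> M"
  shows "p ^ l / fact l * (real l ^ 2 * real n ^ (l - 1) + real n ^ l * (p * (real n * p + real l)))
           \<le> p * (M + 1) * exp_term (4 * M) l"
proof -
  define a where "a = real n * p"
  have a: "0 \<le> a" "a \<le> M"
    using assms by (simp_all add: a_def)
  have "p ^ l / fact l * (real l ^ 2 * real n ^ (l - 1) + real n ^ l * (p * (real n * p + real l)))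
      = (real l ^ 2 * (p ^ l * real n ^ (l - 1)) + p * (a ^ l * (a + real l))) / fact l"
    by (simp add: a_def power_mult_distrib algebra_simps add_divide_distrib)
  also have "\<dots> \<le> (real l ^ 2 * (p * M ^ l) + p * (M ^ l * (M + real l))) / fact l"
  proof (intro divide_right_mono add_mono)
    show "real l ^ 2 * (p ^ l * real n ^ (l - 1)) \<le> real l ^ 2 * (p * M ^ l)"
    proof (cases l)
      case (Suc l')
      have "a ^ l' \<le> M ^ l'"
        using a by (intro power_mono) auto
      also have "\<dots> \<le> M ^ l"
        using assms by (intro power_increasing) (auto simp: Suc)
      finally have "p * (real n * p) ^ l' \<le> p * M ^ l"
        using assms(1) by (simp add: a_def mult_left_mono)
      then have "p ^ l * real n ^ (l - 1) \<le> p * M ^ l"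
        by (simp add: Suc power_mult_distrib ac_simps)
      then show ?thesis
        by (rule mult_left_mono) simp
    qed simp
    show "p * (a ^ l * (a + real l)) \<le> p * (M ^ l * (M + real l))"
      using a assms by (intro mult_left_mono mult_mono power_mono) auto
  qed simp
  also have "\<dots> = p * (M ^ l * (real l ^ 2 + real l + M) / fact l)"
    by (simp add: algebra_simps add_divide_distrib)
  also have "\<dots> \<le> p * ((M + 1) * exp_term (4 * M) l)"
    using assms power_mult_poly_le_exp_term[OF assms(3)] by (intro mult_left_mono) auto
  finally show ?thesis
    by (simp add: mult.assoc)
qed

lemma abs_binom_prob_sub_poi_le:
  assumes "0 \<le> p" "p \<le> 1" "real n * p \<le> M" "0 \<le> a" "a \<le> M" "1 \<le> M"
  shows "\<bar>binom_prob n p l - poi a l\<bar> \<le> (p * (M + 1) + \<bar>real n * p - a\<bar>) * exp_term (4 * M) l"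
proof -
  have "\<bar>binom_prob n p l - poi a l\<bar>
      \<le> \<bar>binom_prob n p l - poi (real n * p) l\<bar> + \<bar>poi (real n * p) l - poi a l\<bar>"
    by linarith
  also have "\<dots> \<le> p * (M + 1) * exp_term (4 * M) l + \<bar>real n * p - a\<bar> * exp_term (2 * M) l"
    using assms by (intro add_mono order_trans[OF abs_binom_prob_sub_poi_le_power binom_poi_error_le_exp_term]
        abs_poi_diff_le) auto
  also have "\<dots> \<le> p * (M + 1) * exp_term (4 * M) l + \<bar>real n * p - a\<bar> * exp_term (4 * M) l"
    using assms by (intro add_mono mult_left_mono exp_term_mono) auto
  finally show ?thesis
    by (simp add: algebra_simps)
qed

text \<open>For probability mass functions f and g of independent X and Y,
  diff_conv f g k is the probability that X - Y = k.\<close>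

definition diff_conv_term :: "(nat \<Rightarrow> real) \<Rightarrow> (nat \<Rightarrow> real) \<Rightarrow> int \<Rightarrow> nat \<Rightarrow> real" where
  "diff_conv_term f g k m = (if 0 \<le> k + int m then f (nat (k + int m)) * g m else 0)"

definition diff_conv :: "(nat \<Rightarrow> real) \<Rightarrow> (nat \<Rightarrow> real) \<Rightarrow> int \<Rightarrow> real" where
  "diff_conv f g k = suminf (diff_conv_term f g k)"

lemma summable_diff_conv_term:
  assumes "\<And>l. \<bar>f l\<bar> \<le> h l" "\<And>m. \<bar>g m\<bar> \<le> h m" "summable h"
  shows "summable (diff_conv_term f g k)"
proof (rule summable_comparison_test)
  have h: "0 \<le> h l" for l
    using assms(1)[of l] by linarith
  have "h l \<le> suminf h" for l
    using sum_le_suminf[OF assms(3), of "{l}"] h by simp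
  moreover have "0 \<le> suminf h"
    using assms(3) h by (rule suminf_nonneg)
  ultimately have "\<bar>f l * g m\<bar> \<le> suminf h * h m" for l m
    unfolding abs_mult using assms(1,2) h by (intro mult_mono) (auto intro: order_trans)
  with \<open>0 \<le> suminf h\<close> show "\<exists>N. \<forall>m\<ge>N. norm (diff_conv_term f g k m) \<le> suminf h * h m"
    using h by (auto simp: diff_conv_term_def)
  show "summable (\<lambda>m. suminf h * h m)"
    using assms(3) by (rule summable_mult)
qed

lemma abs_diff_conv_sub_le:
  assumes "\<And>l. \<bar>f\<^sub>1 l - g\<^sub>1 l\<bar> \<le> e * h l" "\<And>m. \<bar>f\<^sub>2 m - g\<^sub>2 m\<bar> \<le> e * h m"
    and "\<And>l. \<bar>f\<^sub>1 l\<bar> \<le> h l" "\<And>m. \<bar>f\<^sub>2 m\<bar> \<le> h m" "\<And>l. \<bar>g\<^sub>1 l\<bar> \<le> h l" "\<And>m. \<bar>g\<^sub>2 m\<bar> \<le> h m"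
    and "summable h" "0 \<le> e"
  shows "\<bar>diff_conv f\<^sub>1 f\<^sub>2 k - diff_conv g\<^sub>1 g\<^sub>2 k\<bar> \<le> 2 * e * diff_conv h h k"
proof -
  let ?A = "diff_conv_term f\<^sub>1 f\<^sub>2 k" and ?B = "diff_conv_term g\<^sub>1 g\<^sub>2 k" and ?C = "diff_conv_term h h k"
  have h: "0 \<le> h l" for l
    using assms(3)[of l] by linarith
  have bound: "\<bar>?A m - ?B m\<bar> \<le> 2 * e * ?C m" for m
  proof (cases "0 \<le> k + int m")
    case True
    define l where "l = nat (k + int m)"
    have "\<bar>f\<^sub>1 l * f\<^sub>2 m - g\<^sub>1 l * g\<^sub>2 m\<bar> = \<bar>(f\<^sub>1 l - g\<^sub>1 l) * f\<^sub>2 m + g\<^sub>1 l * (f\<^sub>2 m - g\<^sub>2 m)\<bar>"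
      by (simp add: algebra_simps)
    also have "\<dots> \<le> \<bar>f\<^sub>1 l - g\<^sub>1 l\<bar> * \<bar>f\<^sub>2 m\<bar> + \<bar>g\<^sub>1 l\<bar> * \<bar>f\<^sub>2 m - g\<^sub>2 m\<bar>"
      by (simp add: abs_mult abs_triangle_ineq[THEN order_trans])
    also have "\<dots> \<le> (e * h l) * h m + h l * (e * h m)"
      using assms h by (intro add_mono mult_mono) auto
    finally show ?thesis
      using True by (simp add: diff_conv_term_def l_def algebra_simps)
  qed (simp add: diff_conv_term_def)
  have sA: "summable ?A"
    using assms(3,4,7) by (rule summable_diff_conv_term)
  have sB: "summable ?B"
    using assms(5,6,7) by (rule summable_diff_conv_term)
  have sC: "summable ?C"
    using h assms(7) by (intro summable_diff_conv_term) auto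
  have "(\<Sum>m. ?A m - ?B m) \<le> (\<Sum>m. 2 * e * ?C m)" "(\<Sum>m. ?B m - ?A m) \<le> (\<Sum>m. 2 * e * ?C m)"
    using bound sA sB sC by (auto intro!: suminf_le summable_diff summable_mult simp: abs_le_iff)
  moreover have "suminf ?A - suminf ?B = (\<Sum>m. ?A m - ?B m)" "suminf ?B - suminf ?A = (\<Sum>m. ?B m - ?A m)"
    using sA sB by (simp_all add: suminf_diff)
  moreover have "(\<Sum>m. 2 * e * ?C m) = 2 * e * suminf ?C"
    using sC by (rule suminf_mult)
  ultimately show ?thesis
    unfolding diff_conv_def by linarith
qed

lemma diff_conv_le_scaled:
  assumes "\<And>l. 0 \<le> f\<^sub>1 l" "\<And>l. f\<^sub>1 l \<le> c * f\<^sub>2 l" "\<And>m. 0 \<le> g\<^sub>1 m" "\<And>m. g\<^sub>1 m \<le> d * g\<^sub>2 m"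
    and "summable (diff_conv_term f\<^sub>1 g\<^sub>1 k)" "summable (diff_conv_term f\<^sub>2 g\<^sub>2 k)"
  shows "diff_conv f\<^sub>1 g\<^sub>1 k \<le> c * d * diff_conv f\<^sub>2 g\<^sub>2 k"
proof -
  have "diff_conv_term f\<^sub>1 g\<^sub>1 k m \<le> c * d * diff_conv_term f\<^sub>2 g\<^sub>2 k m" for m
  proof -
    have "f\<^sub>1 l * g\<^sub>1 m \<le> (c * f\<^sub>2 l) * (d * g\<^sub>2 m)" for l
      using assms(1-4) by (intro mult_mono) (auto intro: order_trans)
    from this[of "nat (k + int m)"] show ?thesis
      by (simp add: diff_conv_term_def ac_simps)
  qed
  then show ?thesis
    unfolding diff_conv_def using assms(5,6) by (simp flip: suminf_mult add: suminf_le summable_mult)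
qed

lemma sum_diff_conv_term_le:
  assumes "finite K" "summable f" "\<And>l. 0 \<le> f l" "0 \<le> g m"
  shows "(\<Sum>k\<in>K. diff_conv_term f g k m) \<le> suminf f * g m"
proof -
  define K' where "K' = {k\<in>K. 0 \<le> k + int m}"
  have "inj_on (\<lambda>k. nat (k + int m)) K'"
    by (auto simp: K'_def inj_on_def eq_nat_nat_iff)
  then have "(\<Sum>k\<in>K'. f (nat (k + int m))) = sum f ((\<lambda>k. nat (k + int m)) ` K')"
    by (simp add: sum.reindex)
  also have "\<dots> \<le> suminf f"
    using assms by (intro sum_le_suminf) (auto simp: K'_def)
  finally have "(\<Sum>k\<in>K'. f (nat (k + int m))) * g m \<le> suminf f * g m"
    using assms(4) by (rule mult_right_mono)
  moreover have "(\<Sum>k\<in>K. diff_conv_term f g k m) = (\<Sum>k\<in>K'. f (nat (k + int m)) * g m)"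
    by (simp add: K'_def diff_conv_term_def sum.inter_filter[OF assms(1)])
  ultimately show ?thesis
    by (simp add: sum_distrib_right)
qed

lemma power_mult_diff_conv_term_exp_term_le:
  assumes "1 \<le> W" "0 \<le> G"
  shows "W ^ nat \<bar>k\<bar> * diff_conv_term (exp_term G) (exp_term G) k m
           \<le> diff_conv_term (exp_term (W * G)) (exp_term (W * G)) k m"
proof (cases "0 \<le> k + int m")
  case True
  define l where "l = nat (k + int m)"
  have "W ^ nat \<bar>k\<bar> \<le> W ^ (l + m)"
    using True assms by (intro power_increasing) (auto simp: l_def)
  then have "W ^ nat \<bar>k\<bar> * (exp_term G l * exp_term G m) \<le> W ^ (l + m) * (exp_term G l * exp_term G m)"
    using assms by (intro mult_right_mono) (auto simp: exp_term_nonneg)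
  also have "\<dots> = (exp_term G l * W ^ l) * (exp_term G m * W ^ m)"
    by (simp add: power_add algebra_simps)
  also have "\<dots> = exp_term (W * G) l * exp_term (W * G) m"
    by (simp add: exp_term_mult_power mult.commute[of W G])
  finally show ?thesis
    using True by (simp add: diff_conv_term_def l_def)
qed (simp add: diff_conv_term_def)

lemma summable_diff_conv_term_exp_term: "0 \<le> G \<Longrightarrow> summable (diff_conv_term (exp_term G) (exp_term G) k)"
  by (rule summable_diff_conv_term[where h = "exp_term G"]) (auto simp: exp_term_nonneg summable_exp_term)

lemma diff_conv_exp_term_nonneg: "0 \<le> G \<Longrightarrow> 0 \<le> diff_conv (exp_term G) (exp_term G) k"
  unfolding diff_conv_def
  by (intro suminf_nonneg summable_diff_conv_term_exp_term) (auto simp: diff_conv_term_def exp_term_nonneg)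

lemma sum_power_mult_diff_conv_exp_term_le:
  assumes "finite K" "1 \<le> W" "0 \<le> G"
  shows "(\<Sum>k\<in>K. W ^ nat \<bar>k\<bar> * diff_conv (exp_term G) (exp_term G) k) \<le> exp (W * G) ^ 2"
proof -
  let ?h = "exp_term (W * G)"
  have WG: "0 \<le> W * G"
    using assms by simp
  have "(\<Sum>k\<in>K. W ^ nat \<bar>k\<bar> * diff_conv (exp_term G) (exp_term G) k)
      = (\<Sum>m. \<Sum>k\<in>K. W ^ nat \<bar>k\<bar> * diff_conv_term (exp_term G) (exp_term G) k m)"
    using assms summable_diff_conv_term_exp_term
    by (simp add: diff_conv_def suminf_sum summable_mult flip: suminf_mult)
  also have "\<dots> \<le> (\<Sum>m. exp (W * G) * ?h m)"
  proof (rule suminf_le)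
    fix m
    have "(\<Sum>k\<in>K. W ^ nat \<bar>k\<bar> * diff_conv_term (exp_term G) (exp_term G) k m)
        \<le> (\<Sum>k\<in>K. diff_conv_term ?h ?h k m)"
      using assms by (intro sum_mono power_mult_diff_conv_term_exp_term_le)
    also have "\<dots> \<le> exp (W * G) * ?h m"
      using sum_diff_conv_term_le[OF assms(1) summable_exp_term] WG
      by (simp add: exp_term_nonneg suminf_exp_term)
    finally show "(\<Sum>k\<in>K. W ^ nat \<bar>k\<bar> * diff_conv_term (exp_term G) (exp_term G) k m) \<le> exp (W * G) * ?h m" .
  qed (use assms summable_diff_conv_term_exp_term in \<open>auto intro!: summable_sum summable_mult summable_exp_term\<close>)
  also have "\<dots> = exp (W * G) ^ 2"
    by (simp add: suminf_mult summable_exp_term suminf_exp_term power2_eq_square)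
  finally show ?thesis .
qed

lemma summable_diff_conv_term_poi:
  "0 \<le> a \<Longrightarrow> 0 \<le> b \<Longrightarrow> summable (diff_conv_term (poi a) (poi b) k)"
  by (rule summable_diff_conv_term[where h = "exp_term (max a b)"])
     (auto simp: abs_poi_le_exp_term summable_exp_term)

lemma diff_conv_poi_pos:
  assumes "0 < a" "0 < b"
  shows "0 < diff_conv (poi a) (poi b) k"
  unfolding diff_conv_def
proof (rule suminf_pos2)
  show "summable (diff_conv_term (poi a) (poi b) k)"
    using assms by (intro summable_diff_conv_term_poi) auto
  show "0 \<le> diff_conv_term (poi a) (poi b) k m" for m
    using assms by (simp add: diff_conv_term_def poi_nonneg)
  show "0 < diff_conv_term (poi a) (poi b) k (nat \<bar>k\<bar>)"
    using assms by (simp add: diff_conv_term_def poi_def)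
qed

lemma diff_conv_poi_eq_reflect:
  assumes "0 < a" "0 < b"
  shows "diff_conv (poi a) (poi b) (int k) = (a / b) ^ k * diff_conv (poi a) (poi b) (- int k)"
proof -
  let ?F = "\<lambda>m. poi a m * poi b (m + k)"
  have "(\<lambda>m. diff_conv_term (poi a) (poi b) (- int k) (m + k)) = ?F"
    by (simp add: diff_conv_term_def fun_eq_iff)
  moreover have "diff_conv_term (poi a) (poi b) (- int k) sums diff_conv (poi a) (poi b) (- int k)"
    unfolding diff_conv_def using assms by (intro summable_sums summable_diff_conv_term_poi) auto
  ultimately have "?F sums diff_conv (poi a) (poi b) (- int k)"
    by (subst (asm) sums_zero_iff_shift[of k, symmetric]) (auto simp: diff_conv_term_def)
  moreover have "diff_conv_term (poi a) (poi b) (int k) = (\<lambda>m. (a / b) ^ k * ?F m)"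
    using assms by (simp add: diff_conv_term_def fun_eq_iff poi_def power_add power_divide field_simps nat_int_add)
  ultimately show ?thesis
    by (simp add: diff_conv_def sums_unique[symmetric] sums_mult)
qed

lemma diff_conv_poi_le_reflect:
  assumes "0 < a" "0 < b" "a / b \<le> T" "b / a \<le> T"
  shows "diff_conv (poi a) (poi b) k \<le> T ^ nat \<bar>k\<bar> * diff_conv (poi a) (poi b) (- k)"
proof -
  have nonneg: "0 \<le> diff_conv (poi a) (poi b) k" for k
    using diff_conv_poi_pos[OF assms(1,2)] less_imp_le by blast
  show ?thesis
  proof (cases "0 \<le> k")
    case True
    then obtain n where k: "k = int n"
      by (metis nonneg_eq_int)
    have "(a / b) ^ n \<le> T ^ n"
      using assms by (intro power_mono) auto
    then show ?thesis
      using diff_conv_poi_eq_reflect[OF assms(1,2), of n] nonneg k by (simp add: mult_right_mono)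
  next
    case False
    then obtain n where k: "k = - int n"
      by (metis neg_0_le_iff_le nonneg_eq_int minus_minus linear)
    have "diff_conv (poi a) (poi b) k = (b / a) ^ n * diff_conv (poi a) (poi b) (- k)"
      using diff_conv_poi_eq_reflect[OF assms(1,2), of n] assms k by (simp add: power_divide field_simps)
    moreover have "(b / a) ^ n \<le> T ^ n"
      using assms by (intro power_mono) auto
    ultimately show ?thesis
      using nonneg k by (simp add: mult_right_mono)
  qed
qed

lemma abs_diff_conv_binom_sub_poi_le:
  assumes "0 \<le> p" "p \<le> 1" "0 \<le> q" "q \<le> 1" "real n * p \<le> M" "real m * q \<le> M"
    and "0 \<le> a" "a \<le> M" "0 \<le> b" "b \<le> M" "1 \<le> M"
    and "p * (M + 1) + \<bar>real n * p - a\<bar> \<le> \<epsilon>" "q * (M + 1) + \<bar>real m * q - b\<bar> \<le> \<epsilon>"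
  shows "\<bar>diff_conv (binom_prob n p) (binom_prob m q) k - diff_conv (poi a) (poi b) k\<bar>
           \<le> 2 * \<epsilon> * diff_conv (exp_term (4 * M)) (exp_term (4 * M)) k"
proof (rule abs_diff_conv_sub_le)
  let ?h = "exp_term (4 * M)"
  have h: "0 \<le> ?h l" for l
    using assms by (auto intro: exp_term_nonneg)
  have approx: "\<bar>binom_prob n' p' l - poi a' l\<bar> \<le> \<epsilon> * ?h l"
    if "0 \<le> p'" "p' \<le> 1" "real n' * p' \<le> M" "0 \<le> a'" "a' \<le> M" "p' * (M + 1) + \<bar>real n' * p' - a'\<bar> \<le> \<epsilon>"
    for n' p' a' l
    using abs_binom_prob_sub_poi_le[of p' n' M a' l] that assms(11)
      mult_right_mono[OF that(6) h(1)[of l]] by simp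
  show "\<bar>binom_prob n p l - poi a l\<bar> \<le> \<epsilon> * ?h l" for l
    using assms by (intro approx) auto
  show "\<bar>binom_prob m q l - poi b l\<bar> \<le> \<epsilon> * ?h l" for l
    using assms by (intro approx) auto
  show "\<bar>binom_prob n p l\<bar> \<le> ?h l" "\<bar>binom_prob m q l\<bar> \<le> ?h l" "\<bar>poi a l\<bar> \<le> ?h l" "\<bar>poi b l\<bar> \<le> ?h l" for l
    using assms by (auto intro: abs_binom_prob_le_exp_term abs_poi_le_exp_term)
  show "summable ?h"
    by (rule summable_exp_term)
  show "0 \<le> \<epsilon>"
    using assms(1,11,12) by (smt (verit) mult_nonneg_nonneg)
qed

lemma diff_conv_binom_le_poi:
  assumes "0 \<le> p" "p \<le> 1" "0 \<le> q" "q \<le> 1"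
  shows "diff_conv (binom_prob n p) (binom_prob m q) k
           \<le> exp (real n * p) * exp (real m * q) * diff_conv (poi (real n * p)) (poi (real m * q)) k"
proof (rule diff_conv_le_scaled)
  let ?c = "max (real n * p) (real m * q)"
  show "binom_prob n p l \<le> exp (real n * p) * poi (real n * p) l"
    and "binom_prob m q l \<le> exp (real m * q) * poi (real m * q) l" for l
    using assms binom_prob_le_exp_term by (simp_all add: poi_eq_exp_term exp_minus field_simps)
  show "summable (diff_conv_term (binom_prob n p) (binom_prob m q) k)"
    using assms by (intro summable_diff_conv_term[where h = "exp_term ?c"])
      (auto simp: summable_exp_term intro: abs_binom_prob_le_exp_term)
  show "summable (diff_conv_term (poi (real n * p)) (poi (real m * q)) k)"
    using assms by (intro summable_diff_conv_term_poi) auto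
qed (use assms in \<open>auto intro: binom_prob_nonneg\<close>)

section \<open>The transition matrix and its Poisson limit\<close>

lemma Pmat_eq_diff_conv:
  assumes "\<mu> \<noteq> real N" "\<nu> \<noteq> real N"
  shows "Pmat \<mu> \<nu> N i j = diff_conv (binom_prob (N - i) (\<mu> / real N)) (binom_prob i (\<nu> / real N)) (int j - int i)"
proof -
  define v w n k where "v = \<mu> / real N" and "w = \<nu> / real N" and "n = N - i" and "k = int j - int i"
  define S where "S = {(l, m). l \<le> n \<and> m \<le> i \<and> int l - int m = k}"
  define T where "T = {m. m \<le> i \<and> 0 \<le> k + int m \<and> nat (k + int m) \<le> n}"
  have "v \<noteq> 1" "w \<noteq> 1"
    using assms by (auto simp: v_def w_def field_simps split: if_splits)
  have "Pmat \<mu> \<nu> N i j = (\<Sum>(l, m) \<in> S. binom_prob n v l * binom_prob i w m)"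
    unfolding Pmat_def Let_def sum_distrib_left
    using \<open>v \<noteq> 1\<close> \<open>w \<noteq> 1\<close>
    by (intro sum.cong) (auto simp: S_def binom_prob_eq_power_mult v_def w_def n_def k_def)
  also have "S = (\<lambda>m. (nat (k + int m), m)) ` T"
    by (force simp: S_def T_def image_iff)
  also have "(\<Sum>(l, m) \<in> (\<lambda>m. (nat (k + int m), m)) ` T. binom_prob n v l * binom_prob i w m)
      = (\<Sum>m\<in>T. diff_conv_term (binom_prob n v) (binom_prob i w) k m)"
    by (subst sum.reindex) (auto simp: inj_on_def T_def diff_conv_term_def)
  also have "\<dots> = (\<Sum>m\<le>i. diff_conv_term (binom_prob n v) (binom_prob i w) k m)"
    by (intro sum.mono_neutral_left) (auto simp: T_def diff_conv_term_def binom_prob_def)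
  also have "\<dots> = diff_conv (binom_prob n v) (binom_prob i w) k"
    unfolding diff_conv_def by (rule suminf_finite[symmetric]) (auto simp: diff_conv_term_def binom_prob_eq_0)
  finally show ?thesis
    by (simp add: v_def w_def n_def k_def)
qed

lemma pdiff_eq_diff_conv: "pdiff \<mu> \<nu> z k = diff_conv (poi (\<mu> * (1 - z))) (poi (\<nu> * z)) k"
  by (simp add: pdiff_def diff_conv_def diff_conv_term_def[abs_def])

lemma Pmat_nonneg:
  assumes "0 \<le> \<mu>" "0 \<le> \<nu>" "max \<mu> \<nu> < real N"
  shows "0 \<le> Pmat \<mu> \<nu> N i j"
proof -
  have "\<mu> / real N \<le> 1" "\<nu> / real N \<le> 1"
    using assms by (auto simp: divide_le_eq_1)
  then show ?thesis
    using assms unfolding Pmat_def Let_def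
    by (intro mult_nonneg_nonneg sum_nonneg) (auto simp: case_prod_beta)
qed

lemma Pmat_le_pdiff:
  assumes "0 < \<mu>" "0 < \<nu>" "max \<mu> \<nu> < real N" "i \<le> N"
  shows "Pmat \<mu> \<nu> N i j \<le> exp (\<mu> + \<nu>) * pdiff \<mu> \<nu> (real i / real N) (int j - int i)"
proof -
  define v w z where "v = \<mu> / real N" and "w = \<nu> / real N" and "z = real i / real N"
  have N: "0 < real N"
    using assms(1,3) by linarith
  have vw: "0 \<le> v" "v \<le> 1" "0 \<le> w" "w \<le> 1"
    using assms N by (auto simp: v_def w_def)
  have \<mu>: "real (N - i) * v = \<mu> * (1 - z)" and \<nu>: "real i * w = \<nu> * z"
    using assms(4) N by (simp_all add: z_def v_def w_def of_nat_diff field_simps)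
  have z: "0 \<le> z" "z \<le> 1"
    using assms(4) by (auto simp: z_def divide_le_eq_1)
  have "Pmat \<mu> \<nu> N i j = diff_conv (binom_prob (N - i) v) (binom_prob i w) (int j - int i)"
    unfolding v_def w_def using assms(3) by (intro Pmat_eq_diff_conv) auto
  also have "\<dots> \<le> exp (\<mu> * (1 - z)) * exp (\<nu> * z) * pdiff \<mu> \<nu> z (int j - int i)"
    using diff_conv_binom_le_poi[OF vw, of "N - i" i] by (simp add: pdiff_eq_diff_conv \<mu> \<nu>)
  also have "\<dots> \<le> exp (\<mu> + \<nu>) * pdiff \<mu> \<nu> z (int j - int i)"
  proof (rule mult_right_mono)
    show "exp (\<mu> * (1 - z)) * exp (\<nu> * z) \<le> exp (\<mu> + \<nu>)"
    proof -
      have "0 \<le> \<mu> * z" "\<nu> * z \<le> \<nu> * 1"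
        using assms z by (intro mult_nonneg_nonneg mult_left_mono; simp)+
      then show ?thesis
        by (simp add: algebra_simps flip: exp_add)
    qed
    show "0 \<le> pdiff \<mu> \<nu> z (int j - int i)"
      unfolding pdiff_eq_diff_conv diff_conv_def using assms z
      by (intro suminf_nonneg summable_diff_conv_term_poi) (auto simp: diff_conv_term_def poi_nonneg)
  qed
  finally show ?thesis
    by (simp add: z_def)
qed

lemma pdiff_pos: "0 < \<mu> \<Longrightarrow> 0 < \<nu> \<Longrightarrow> 0 < z \<Longrightarrow> z < 1 \<Longrightarrow> 0 < pdiff \<mu> \<nu> z k"
  by (simp add: pdiff_eq_diff_conv diff_conv_poi_pos)

lemma pdiff_le_reflect:
  assumes "0 < \<mu>" "0 < \<nu>" "0 < \<delta>" "\<delta> \<le> z" "z \<le> 1 - \<delta>"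
  shows "pdiff \<mu> \<nu> z k \<le> (1 + \<mu> / (\<nu> * \<delta>) + \<nu> / (\<mu> * \<delta>)) ^ nat \<bar>k\<bar> * pdiff \<mu> \<nu> z (- k)"
  unfolding pdiff_eq_diff_conv
proof (rule diff_conv_poi_le_reflect)
  have "\<mu> * \<delta> \<le> \<mu> * (1 - z)" "\<mu> * (1 - z) \<le> \<mu>" "\<nu> * \<delta> \<le> \<nu> * z" "\<nu> * z \<le> \<nu>"
    using assms by (simp_all add: mult_left_le)
  moreover have "0 < \<mu> * \<delta>" "0 < \<nu> * \<delta>"
    using assms by simp_all
  ultimately have "\<mu> * (1 - z) / (\<nu> * z) \<le> \<mu> / (\<nu> * \<delta>)" "\<nu> * z / (\<mu> * (1 - z)) \<le> \<nu> / (\<mu> * \<delta>)"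
    using assms by (auto intro!: frac_le)
  moreover have "0 \<le> \<mu> / (\<nu> * \<delta>)" "0 \<le> \<nu> / (\<mu> * \<delta>)"
    using assms by simp_all
  ultimately show "\<mu> * (1 - z) / (\<nu> * z) \<le> 1 + \<mu> / (\<nu> * \<delta>) + \<nu> / (\<mu> * \<delta>)"
    and "\<nu> * z / (\<mu> * (1 - z)) \<le> 1 + \<mu> / (\<nu> * \<delta>) + \<nu> / (\<mu> * \<delta>)"
    by linarith+
  show "0 < \<mu> * (1 - z)" "0 < \<nu> * z"
    using assms by simp_all
qed

lemma abs_Pmat_sub_pdiff_le:
  fixes \<mu> \<nu> D :: real and N i i' j :: nat
  assumes "0 < \<mu>" "0 < \<nu>" "max \<mu> \<nu> < real N" "i \<le> N" "i' \<le> N" "\<bar>real i' - real i\<bar> \<le> D"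
  defines "M \<equiv> max \<mu> \<nu> + 1"
  defines "\<epsilon> \<equiv> M * (M + 1 + D) / real N"
  shows "\<bar>Pmat \<mu> \<nu> N i' j - pdiff \<mu> \<nu> (real i / real N) (int j - int i')\<bar>
           \<le> 2 * \<epsilon> * diff_conv (exp_term (4 * M)) (exp_term (4 * M)) (int j - int i')"
proof -
  define v w where "v = \<mu> / real N" and "w = \<nu> / real N"
  have N: "0 < real N"
    using assms(1,3) by linarith
  have vw: "0 \<le> v" "v \<le> 1" "0 \<le> w" "w \<le> 1" "v \<le> M / real N" "w \<le> M / real N"
    using assms N by (auto simp: v_def w_def M_def divide_right_mono)
  have le_M: "real n * v \<le> M" "real n * w \<le> M" if "n \<le> N" for n
    using mult_mono[of "real n" "real N" v "M / real N"] mult_mono[of "real n" "real N" w "M / real N"] that vw N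
    by auto
  have means: "real (N - i') * v \<le> M" "real i' * w \<le> M" "real (N - i) * v \<le> M" "real i * w \<le> M"
    using le_M[of "N - i'"] le_M[of "N - i"] le_M[of i'] le_M[of i] assms(4,5) by simp_all
  have nonneg: "0 \<le> real n * v" "0 \<le> real n * w" for n
    using vw by simp_all
  have D: "\<bar>real (N - i') - real (N - i)\<bar> \<le> D" "\<bar>real i' - real i\<bar> \<le> D"
    using assms(4-6) by (simp_all add: of_nat_diff abs_minus_commute)
  have M: "1 \<le> M" "0 \<le> M + 1"
    using assms(1) by (simp_all add: M_def)
  have errs: "v * (M + 1) + \<bar>real (N - i') * v - real (N - i) * v\<bar> \<le> \<epsilon>"
    "w * (M + 1) + \<bar>real i' * w - real i * w\<bar> \<le> \<epsilon>"
    using add_mult_abs_mult_sub_mult_le[OF vw(1,5) D(1) M(2)] add_mult_abs_mult_sub_mult_le[OF vw(3,6) D(2) M(2)]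
    by (simp_all add: \<epsilon>_def)
  have "Pmat \<mu> \<nu> N i' j = diff_conv (binom_prob (N - i') v) (binom_prob i' w) (int j - int i')"
    unfolding v_def w_def using assms(3) by (intro Pmat_eq_diff_conv) auto
  moreover have "pdiff \<mu> \<nu> (real i / real N) k = diff_conv (poi (real (N - i) * v)) (poi (real i * w)) k" for k
    using assms(4) N by (simp add: pdiff_eq_diff_conv v_def w_def of_nat_diff field_simps)
  ultimately show ?thesis
    using abs_diff_conv_binom_sub_poi_le[OF vw(1-4) means(1,2) nonneg(1) means(3) nonneg(2) means(4)
        M(1) errs]
    by simp
qed

lemma abs_sqrt_Pmat_sub_sqrt_pdiff_le_entrywise:
  fixes \<mu> \<nu> \<delta> :: real and N i j :: nat
  assumes "0 < \<mu>" "0 < \<nu>" "max \<mu> \<nu> < real N" "i \<le> N"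
    and "0 < \<delta>" "\<delta> \<le> real i / real N" "real i / real N \<le> 1 - \<delta>"
  defines "z \<equiv> real i / real N" and "k \<equiv> int j - int i"
  shows "\<bar>sqrt (Pmat \<mu> \<nu> N i j * Pmat \<mu> \<nu> N j i) - sqrt (pdiff \<mu> \<nu> z k * pdiff \<mu> \<nu> z (- k))\<bar>
         \<le> sqrt (exp (\<mu> + \<nu>)) * (1 + \<mu> / (\<nu> * \<delta>) + \<nu> / (\<mu> * \<delta>)) ^ nat \<bar>k\<bar>
             * (\<bar>Pmat \<mu> \<nu> N i j - pdiff \<mu> \<nu> z k\<bar> + \<bar>Pmat \<mu> \<nu> N j i - pdiff \<mu> \<nu> z (- k)\<bar>)"
proof (rule abs_sqrt_mult_sub_sqrt_mult_le)
  have z: "\<delta> \<le> z" "z \<le> 1 - \<delta>"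
    using assms(6,7) by (simp_all add: z_def)
  show "0 \<le> Pmat \<mu> \<nu> N i j" "0 \<le> Pmat \<mu> \<nu> N j i"
    using assms(1-3) by (simp_all add: Pmat_nonneg)
  show "0 < pdiff \<mu> \<nu> z k" "0 < pdiff \<mu> \<nu> z (- k)"
    using assms(1,2,5) z by (simp_all add: pdiff_pos)
  show "Pmat \<mu> \<nu> N i j \<le> exp (\<mu> + \<nu>) * pdiff \<mu> \<nu> z k"
    using Pmat_le_pdiff[OF assms(1-4)] by (simp add: z_def k_def)
  show "pdiff \<mu> \<nu> z k \<le> (1 + \<mu> / (\<nu> * \<delta>) + \<nu> / (\<mu> * \<delta>)) ^ nat \<bar>k\<bar> * pdiff \<mu> \<nu> z (- k)"
    "pdiff \<mu> \<nu> z (- k) \<le> (1 + \<mu> / (\<nu> * \<delta>) + \<nu> / (\<mu> * \<delta>)) ^ nat \<bar>k\<bar> * pdiff \<mu> \<nu> z k"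
    using pdiff_le_reflect[OF assms(1,2,5) z, of k] pdiff_le_reflect[OF assms(1,2,5) z, of "- k"] by simp_all
  show "1 \<le> exp (\<mu> + \<nu>)" "1 \<le> (1 + \<mu> / (\<nu> * \<delta>) + \<nu> / (\<mu> * \<delta>)) ^ nat \<bar>k\<bar>"
    using assms(1,2,5) by simp_all
qed

lemma abs_sqrt_Pmat_sub_sqrt_pdiff_le:
  fixes \<mu> \<nu> \<delta> :: real and N i j :: nat
  assumes "0 < \<mu>" "0 < \<nu>" "max \<mu> \<nu> < real N" "i \<le> N" "j \<le> N"
    and "0 < \<delta>" "\<delta> \<le> real i / real N" "real i / real N \<le> 1 - \<delta>"
  defines "M \<equiv> max \<mu> \<nu> + 1" and "T \<equiv> 1 + \<mu> / (\<nu> * \<delta>) + \<nu> / (\<mu> * \<delta>)" and "k \<equiv> int j - int i"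
  defines "S \<equiv> diff_conv (exp_term (4 * M)) (exp_term (4 * M))"
  shows "\<bar>sqrt (Pmat \<mu> \<nu> N i j * Pmat \<mu> \<nu> N j i)
            - sqrt (pdiff \<mu> \<nu> (real i / real N) k * pdiff \<mu> \<nu> (real i / real N) (- k))\<bar>
         \<le> 2 * sqrt (exp (\<mu> + \<nu>)) * M * (M + 1) / real N * (2 * T) ^ nat \<bar>k\<bar> * (S k + S (- k))"
proof -
  define z K where "z = real i / real N" and "K = nat \<bar>k\<bar>"
  define \<epsilon> where "\<epsilon> = M * (M + 1 + real K) / real N"
  have T: "1 \<le> T"
    using assms(1,2,6) by (simp add: T_def)
  have S: "0 \<le> S k'" for k'
    unfolding S_def using assms(1) by (intro diff_conv_exp_term_nonneg) (simp add: M_def)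
  have "\<bar>real j - real i\<bar> \<le> real K"
    by (simp add: K_def k_def)
  then have "\<bar>Pmat \<mu> \<nu> N i j - pdiff \<mu> \<nu> z k\<bar> \<le> 2 * \<epsilon> * S k"
    "\<bar>Pmat \<mu> \<nu> N j i - pdiff \<mu> \<nu> z (- k)\<bar> \<le> 2 * \<epsilon> * S (- k)"
    using abs_Pmat_sub_pdiff_le[OF assms(1-4) assms(4), of "real K" j] abs_Pmat_sub_pdiff_le[OF assms(1-5), of "real K" i]
    by (simp_all add: M_def z_def k_def \<epsilon>_def S_def)
  then have "\<bar>sqrt (Pmat \<mu> \<nu> N i j * Pmat \<mu> \<nu> N j i) - sqrt (pdiff \<mu> \<nu> z k * pdiff \<mu> \<nu> z (- k))\<bar>
      \<le> sqrt (exp (\<mu> + \<nu>)) * T ^ K * (2 * \<epsilon> * (S k + S (- k)))"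
    using abs_sqrt_Pmat_sub_sqrt_pdiff_le_entrywise[OF assms(1-4,6-8), of j, folded z_def k_def T_def K_def] T
    by (elim order_trans) (intro mult_left_mono; simp add: algebra_simps)
  also have "\<dots> = 2 * sqrt (exp (\<mu> + \<nu>)) * M / real N * (T ^ K * (M + 1 + real K)) * (S k + S (- k))"
    by (simp add: \<epsilon>_def)
  also have "\<dots> \<le> 2 * sqrt (exp (\<mu> + \<nu>)) * M / real N * ((M + 1) * (2 * T) ^ K) * (S k + S (- k))"
    using power_mult_add_le_power[OF T, of M K] S assms(1)
    by (intro mult_right_mono mult_left_mono) (auto simp: M_def)
  finally show ?thesis
    by (simp add: z_def K_def algebra_simps add_divide_distrib)
qed

lemma sum_abs_sqrt_Pmat_sub_sqrt_pdiff_le: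
  fixes \<mu> \<nu> \<delta> :: real and N i :: nat
  assumes "0 < \<mu>" "0 < \<nu>" "max \<mu> \<nu> < real N" "i \<le> N"
    and "0 < \<delta>" "\<delta> \<le> real i / real N" "real i / real N \<le> 1 - \<delta>"
  defines "M \<equiv> max \<mu> \<nu> + 1" and "T \<equiv> 1 + \<mu> / (\<nu> * \<delta>) + \<nu> / (\<mu> * \<delta>)"
  shows "(\<Sum>j\<in>{0..N}. \<bar>sqrt (Pmat \<mu> \<nu> N i j * Pmat \<mu> \<nu> N j i)
            - sqrt (pdiff \<mu> \<nu> (real i / real N) (int j - int i)
                    * pdiff \<mu> \<nu> (real i / real N) (int i - int j))\<bar>)
         \<le> 4 * sqrt (exp (\<mu> + \<nu>)) * M * (M + 1) * exp (2 * T * (4 * M)) ^ 2 / real N"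
proof -
  define A where "A = 2 * sqrt (exp (\<mu> + \<nu>)) * M * (M + 1) / real N"
  define S where "S = diff_conv (exp_term (4 * M)) (exp_term (4 * M))"
  define B where "B = exp (2 * T * (4 * M)) ^ 2"
  define W where "W = (\<lambda>k. (2 * T) ^ nat \<bar>k\<bar> * S k)"
  have "A \<ge> 0"
    using assms(1) by (simp add: A_def M_def)
  have "(\<Sum>k\<in>K. W k) \<le> B" if "finite K" for K
    unfolding W_def S_def B_def using that assms(1,2,5)
    by (intro sum_power_mult_diff_conv_exp_term_le) (auto simp: T_def M_def)
  from this[of "(\<lambda>j. int j - int i) ` {0..N}"] this[of "(\<lambda>j. int i - int j) ` {0..N}"]
  have sums: "(\<Sum>j\<in>{0..N}. W (int j - int i)) \<le> B" "(\<Sum>j\<in>{0..N}. W (int i - int j)) \<le> B"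
    by (simp_all add: sum.reindex inj_on_def)
  have "\<bar>sqrt (Pmat \<mu> \<nu> N i j * Pmat \<mu> \<nu> N j i)
          - sqrt (pdiff \<mu> \<nu> (real i / real N) (int j - int i) * pdiff \<mu> \<nu> (real i / real N) (int i - int j))\<bar>
        \<le> A * (W (int j - int i) + W (int i - int j))" if "j \<in> {0..N}" for j
    using that abs_sqrt_Pmat_sub_sqrt_pdiff_le[OF assms(1-4) _ assms(5-7), of j, folded M_def T_def, folded S_def]
    by (simp add: A_def W_def algebra_simps add_divide_distrib abs_minus_commute[of "int i"])
  then have "(\<Sum>j\<in>{0..N}. \<bar>sqrt (Pmat \<mu> \<nu> N i j * Pmat \<mu> \<nu> N j i)
            - sqrt (pdiff \<mu> \<nu> (real i / real N) (int j - int i) * pdiff \<mu> \<nu> (real i / real N) (int i - int j))\<bar>)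
      \<le> (\<Sum>j\<in>{0..N}. A * (W (int j - int i) + W (int i - int j)))"
    by (rule sum_mono)
  also have "\<dots> = A * ((\<Sum>j\<in>{0..N}. W (int j - int i)) + (\<Sum>j\<in>{0..N}. W (int i - int j)))"
    by (simp add: sum_distrib_left sum.distrib distrib_left)
  also have "\<dots> \<le> A * (B + B)"
    using \<open>A \<ge> 0\<close> sums by (intro mult_left_mono add_mono)
  finally show ?thesis
    by (simp add: A_def B_def)
qed

theorem proposition4:
  fixes \<mu> \<nu> :: real
  assumes "\<mu> > 0" and "\<nu> > 0"
  shows "\<forall>\<delta>::real. 0 < \<delta> \<and> \<delta> < 1/2 \<longrightarrow>
    (\<exists>C::real. \<forall>N::nat. \<forall>i::nat.
       real N > max \<mu> \<nu> \<and> i \<le> N \<and> \<delta> \<le> real i / real N \<and> real i / real N \<le> 1 - \<delta> \<longrightarrow>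
       (\<Sum>j\<in>{0..N}. \<bar>sqrt (Pmat \<mu> \<nu> N i j * Pmat \<mu> \<nu> N j i)
            - sqrt (pdiff \<mu> \<nu> (real i / real N) (int j - int i)
                    * pdiff \<mu> \<nu> (real i / real N) (int i - int j))\<bar>) \<le> C / real N)"
  using sum_abs_sqrt_Pmat_sub_sqrt_pdiff_le[OF assms] by blast

end
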